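(* Let $L>0$, $g\in L^2(0,L;\mathbb{C})$, $\lambda_0=\int_0^L\overline{g(x)}dx$, $\lambda_k=\frac{2ik\pi}{L}$ for $k\in\mathbb{Z}\setminus\{0\}$, and assume $\lambda_0\ne\lambda_k$ for all $k\ne0$. Let $\tilde A^*$ be the operator on $L^2(0,L)$ with domain $D(\tilde A^* )=\{z\in H^1(0,L):z(L)=z(0)\}$, $\tilde A^*z(x)=-z'(x)+\int_0^L\overline{g(y)}z(y)dy$, and $\tilde B^*:D(\tilde A^* )\to\mathbb{C}$, $\tilde B^*z=z(L)$. Then $\ker(\lambda-\tilde A^* )\cap\ker\tilde B^*=\{0\}$ for every $\lambda\in\mathbb{C}$ if and only if $$1+\frac{1}{\lambda_k-\lambda_0}\int_0^L\overline{g(x)}e^{-\lambda_kx}dx\ne0\quad\text{for all }k\in\mathbb{Z}\setminus\{0\}.$$ *)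

theory Defs
  imports "HOL-Analysis.Analysis"
begin

definition L2 :: "real \<Rightarrow> (real \<Rightarrow> complex) \<Rightarrow> bool" where
  "L2 L f \<longleftrightarrow> set_borel_measurable lebesgue {0..L} f
     \<and> set_integrable lebesgue {0..L} (\<lambda>x. (cmod (f x))\<^sup>2)"

text \<open>w is the (weak) L^2 derivative of z on (0,L), with z its absolutely
  continuous representative: z(x) = z(0) + integral of w over [0,x].\<close>
definition has_L2_deriv :: "real \<Rightarrow> (real \<Rightarrow> complex) \<Rightarrow> (real \<Rightarrow> complex) \<Rightarrow> bool" where
  "has_L2_deriv L z w \<longleftrightarrow> L2 L w \<and>
     (\<forall>x\<in>{0..L}. z x = z 0 + (LINT t:{0..x}|lebesgue. w t))"

definition H1 :: "real \<Rightarrow> (real \<Rightarrow> complex) \<Rightarrow> bool" where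
  "H1 L z \<longleftrightarrow> L2 L z \<and> (\<exists>w. has_L2_deriv L z w)"

definition dom_Astar :: "real \<Rightarrow> (real \<Rightarrow> complex) set" where
  "dom_Astar L = {z. H1 L z \<and> z L = z 0}"

definition in_ker_Astar :: "real \<Rightarrow> (real \<Rightarrow> complex) \<Rightarrow> complex \<Rightarrow> (real \<Rightarrow> complex) \<Rightarrow> bool" where
  "in_ker_Astar L g lam z \<longleftrightarrow> z \<in> dom_Astar L \<and>
     (\<exists>w. has_L2_deriv L z w \<and>
        (AE x in lebesgue. x \<in> {0<..<L} \<longrightarrow>
           lam * z x = - w x + (LINT y:{0..L}|lebesgue. cnj (g y) * z y)))"

definition Bstar :: "real \<Rightarrow> (real \<Rightarrow> complex) \<Rightarrow> complex" where
  "Bstar L z = z L"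

definition lam0 :: "real \<Rightarrow> (real \<Rightarrow> complex) \<Rightarrow> complex" where
  "lam0 L g = (LINT x:{0..L}|lebesgue. cnj (g x))"

definition lamk :: "real \<Rightarrow> int \<Rightarrow> complex" where
  "lamk L k = 2 * \<i> * of_int k * of_real pi / of_real L"

end

theory Submission
  imports Defs
begin

text \<open>
  A kernel element z of \<lambda> - A* with z(L) = 0 has z(0) = 0 and solves z' = c - \<lambda> z
  for the constant c = \<integral> conj(g) z, so z(x) = c x if \<lambda> = 0 and
  z(x) = (c/\<lambda>)(1 - exp(-\<lambda>x)) otherwise. If z \<noteq> 0, then z(L) = 0 forces \<lambda> = \<lambda>_k
  with k \<noteq> 0, and substituting z back into the definition of c gives
  \<lambda>_k = \<lambda>_0 - \<integral> conj(g(x)) exp(-\<lambda>_k x) dx, which is exactly the failure of the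
  condition at k. Conversely, if the condition fails at k, then 1 - exp(-\<lambda>_k x) is a
  nonzero element of both kernels.
\<close>

definition laplace_cnj :: "real \<Rightarrow> (real \<Rightarrow> complex) \<Rightarrow> complex \<Rightarrow> complex" where
  "laplace_cnj L g s = (LINT x:{0..L}|lebesgue. cnj (g x) * exp (- (s * of_real x)))"

lemma L2_imp_set_integrable:
  assumes "L2 L g"
  shows "set_integrable lebesgue {0..L} g"
proof (rule set_integrable_bound[where f = "\<lambda>x. 1 + (cmod (g x))\<^sup>2"])
  have "set_integrable lebesgue {0..L} (\<lambda>x. 1::real)"
    by (rule absolutely_integrable_continuous_real) simp
  then show "set_integrable lebesgue {0..L} (\<lambda>x. 1 + (cmod (g x))\<^sup>2)"
    using assms unfolding L2_def by (intro set_integral_add) auto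
  show "set_borel_measurable lebesgue {0..L} g"
    using assms by (simp add: L2_def)
  have "cmod (g x) \<le> 1 + (cmod (g x))\<^sup>2" for x
    using zero_le_power2[of "cmod (g x) - 1"] norm_ge_zero[of "g x"]
    unfolding power2_diff power_one mult_1_right by linarith
  then show "AE x in lebesgue. x \<in> {0..L} \<longrightarrow> norm (g x) \<le> norm (1 + (cmod (g x))\<^sup>2)"
    by (intro AE_I2) simp
qed

lemma continuous_on_imp_L2:
  fixes h :: "real \<Rightarrow> complex"
  assumes "continuous_on {0..L} h"
  shows "L2 L h"
proof -
  have "set_integrable lebesgue {0..L} h"
    by (rule absolutely_integrable_continuous_real[OF assms])
  then have "set_borel_measurable lebesgue {0..L} h"
    unfolding set_borel_measurable_def set_integrable_def by (rule borel_measurable_integrable)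
  moreover have "set_integrable lebesgue {0..L} (\<lambda>x. (cmod (h x))\<^sup>2)"
    by (intro absolutely_integrable_continuous_real continuous_intros assms)
  ultimately show ?thesis
    unfolding L2_def by blast
qed

lemma set_integrable_mult_continuous:
  fixes g h :: "real \<Rightarrow> complex"
  assumes "set_integrable lebesgue {a..b} g" "continuous_on {a..b} h"
  shows "set_integrable lebesgue {a..b} (\<lambda>x. g x * h x)"
proof -
  have "(\<lambda>x. h x * g x) absolutely_integrable_on {a..b}"
  proof (rule absolutely_integrable_bounded_measurable_product[OF bilinear_times _ _ _ assms(1)])
    show "h \<in> borel_measurable (lebesgue_on {a..b})"
      by (rule continuous_imp_measurable_on_sets_lebesgue[OF assms(2)]) auto
    show "bounded (h ` {a..b})"
      by (intro compact_imp_bounded compact_continuous_image assms) auto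
  qed auto
  then show ?thesis
    by (simp add: mult.commute)
qed

lemma set_integrable_cnj:
  fixes g :: "'a \<Rightarrow> complex"
  assumes "set_integrable M A g"
  shows "set_integrable M A (\<lambda>x. cnj (g x))"
  using assms complex_integrable_cnj[of M "\<lambda>x. indicator A x *\<^sub>R g x"]
  by (simp add: set_integrable_def)

lemma set_integrable_cnj_mult_exp:
  assumes "L2 L g"
  shows "set_integrable lebesgue {0..L} (\<lambda>x. cnj (g x) * exp (- (s * of_real x)))"
  by (intro set_integrable_mult_continuous set_integrable_cnj L2_imp_set_integrable assms
      continuous_intros)

lemma set_integral_cnj_mult_one_minus_exp:
  assumes "L2 L g"
  shows "(LINT x:{0..L}|lebesgue. cnj (g x) * (a * (1 - exp (- (s * of_real x)))))
           = a * (lam0 L g - laplace_cnj L g s)"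
proof -
  have "(LINT x:{0..L}|lebesgue. cnj (g x) * (a * (1 - exp (- (s * of_real x)))))
      = (LINT x:{0..L}|lebesgue. a * (cnj (g x) - cnj (g x) * exp (- (s * of_real x))))"
    by (rule set_lebesgue_integral_cong) (auto simp: algebra_simps)
  also have "\<dots> = a * (LINT x:{0..L}|lebesgue. cnj (g x) - cnj (g x) * exp (- (s * of_real x)))"
    by (rule set_integral_mult_right)
  also have "\<dots> = a * (lam0 L g - laplace_cnj L g s)"
    unfolding lam0_def laplace_cnj_def
    using set_integral_diff(2)[OF set_integrable_cnj[OF L2_imp_set_integrable[OF assms]]
        set_integrable_cnj_mult_exp[OF assms]] by simp
  finally show ?thesis .
qed

lemma continuous_AE_zero_imp_zero:
  fixes z :: "real \<Rightarrow> 'a::real_normed_vector"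
  assumes "continuous_on {a..b} z" "AE x in lebesgue. x \<in> {a..b} \<longrightarrow> z x = 0"
    and "t \<in> {a<..<b}"
  shows "z t = 0"
proof (rule ccontr)
  assume "z t \<noteq> 0"
  define S where "S = {a<..<b} \<inter> z -` (- {0})"
  obtain N where N: "negligible N" "{x. \<not> (x \<in> {a..b} \<longrightarrow> z x = 0)} \<subseteq> N"
    using assms(2) unfolding eventually_ae_filter_negligible by blast
  have "S \<subseteq> N"
    using N(2) by (auto simp: S_def subset_iff)
  with N(1) have "negligible S"
    by (rule negligible_subset)
  moreover have "open S"
    unfolding S_def
    by (intro continuous_open_preimage continuous_on_subset[OF assms(1)]) auto
  moreover have "S \<noteq> {}"
    using assms(3) \<open>z t \<noteq> 0\<close> by (auto simp: S_def)
  ultimately show False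
    using open_not_negligible by auto
qed

lemma has_L2_deriv_eq_integral:
  assumes "has_L2_deriv L z w" "x \<in> {0..L}"
  shows "z x = z 0 + integral {0..x} w"
proof -
  have w: "L2 L w" and z: "z x = z 0 + (LINT t:{0..x}|lebesgue. w t)"
    using assms unfolding has_L2_deriv_def by blast+
  have "set_integrable lebesgue {0..x} w"
    by (rule set_integrable_subset[OF L2_imp_set_integrable[OF w]]) (use assms(2) in auto)
  then show ?thesis
    using z by (simp add: set_lebesgue_integral_eq_integral(2))
qed

lemma has_L2_deriv_continuous_on:
  assumes "has_L2_deriv L z w"
  shows "continuous_on {0..L} z"
proof -
  have "L2 L w"
    using assms unfolding has_L2_deriv_def by blast
  then have "w integrable_on {0..L}"
    by (intro set_lebesgue_integral_eq_integral(1) L2_imp_set_integrable)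
  then have "continuous_on {0..L} (\<lambda>x. z 0 + integral {0..x} w)"
    by (intro continuous_intros indefinite_integral_continuous_1)
  then show ?thesis
    by (rule continuous_on_eq) (use has_L2_deriv_eq_integral[OF assms] in presburger)
qed

lemma in_ker_Astar_has_vector_derivative:
  assumes "in_ker_Astar L g lam z" "x \<in> {0..L}"
  shows "(z has_vector_derivative
           (LINT y:{0..L}|lebesgue. cnj (g y) * z y) - lam * z x) (at x within {0..L})"
proof -
  define c where "c = (LINT y:{0..L}|lebesgue. cnj (g y) * z y)"
  define F where "F t = c - lam * z t" for t
  from assms(1) obtain w where w: "has_L2_deriv L z w"
    and eq: "AE t in lebesgue. t \<in> {0<..<L} \<longrightarrow> lam * z t = - w t + c"
    unfolding in_ker_Astar_def c_def by blast
  obtain N where N: "negligible N" "{t. \<not> (t \<in> {0<..<L} \<longrightarrow> lam * z t = - w t + c)} \<subseteq> N"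
    using eq unfolding eventually_ae_filter_negligible by blast
  \<comment> \<open>The weak derivative w agrees a.e. with the continuous F, so z is C^1.\<close>
  have z_eq: "z y = z 0 + integral {0..y} F" if "y \<in> {0..L}" for y
  proof -
    have "integral {0..y} w = integral {0..y} F"
    proof (rule integral_spike)
      show "negligible (N \<union> {0, L})"
        using N(1) by simp
      show "F t = w t" if "t \<in> {0..y} - (N \<union> {0, L})" for t
      proof -
        have "t \<in> {0<..<L}" "t \<notin> N"
          using that \<open>y \<in> {0..L}\<close> by auto
        then have "lam * z t = - w t + c"
          using N(2) by auto
        then show ?thesis
          by (simp add: F_def)
      qed
    qed
    then show ?thesis
      using has_L2_deriv_eq_integral[OF w that] by simp
  qed
  have "continuous_on {0..L} F"
    unfolding F_def by (intro continuous_intros has_L2_deriv_continuous_on[OF w])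
  then have "((\<lambda>y. z 0 + integral {0..y} F) has_vector_derivative F x) (at x within {0..L})"
    using has_vector_derivative_add[OF has_vector_derivative_const
        integral_has_vector_derivative[OF _ assms(2)]] by simp
  with assms(2) z_eq show ?thesis
    unfolding c_def[symmetric] F_def[symmetric] by (rule has_vector_derivative_transform)
qed

lemma has_vector_derivative_exp_mult_of_real:
  fixes a :: complex
  shows "((\<lambda>t. exp (a * of_real t)) has_vector_derivative a * exp (a * of_real t)) (at t within S)"
  using exp_scaleR_has_vector_derivative_right[of a t S]
  by (simp add: scaleR_conv_of_real mult.commute)

lemma linear_ode_solution:
  fixes z :: "real \<Rightarrow> complex"
  assumes "lam \<noteq> 0" "z 0 = 0" "x \<in> {0..L}"
    and "\<And>t. t \<in> {0..L} \<Longrightarrow> (z has_vector_derivative c - lam * z t) (at t within {0..L})"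
  shows "z x = c / lam * (1 - exp (- (lam * of_real x)))"
proof -
  define K where "K t = exp (lam * of_real t) * (z t - c / lam)" for t
  have "(K has_vector_derivative 0) (at t within {0..L})" if "t \<in> {0..L}" for t
  proof -
    have "(K has_vector_derivative
            exp (lam * of_real t) * (c - lam * z t - 0) + lam * exp (lam * of_real t) * (z t - c / lam))
            (at t within {0..L})"
      unfolding K_def
      by (intro has_vector_derivative_mult has_vector_derivative_diff has_vector_derivative_const
          has_vector_derivative_exp_mult_of_real assms(4) that)
    moreover have "exp (lam * of_real t) * (c - lam * z t - 0) + lam * exp (lam * of_real t) * (z t - c / lam) = 0"
      using assms(1) by (simp add: field_simps)
    ultimately show ?thesis
      by simp
  qed
  then obtain C where "\<And>t. t \<in> {0..L} \<Longrightarrow> K t = C"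
    using has_vector_derivative_zero_constant[of "{0..L}" K] by (metis convex_real_interval(5))
  from this[of x] this[of 0] have "K x = K 0"
    using assms(3) by auto
  with assms(2) have "K x = - (c / lam)"
    by (simp add: K_def)
  have "z x - c / lam = exp (- (lam * of_real x)) * K x"
    using exp_minus_inverse[of "lam * of_real x"] by (simp add: K_def algebra_simps)
  also have "\<dots> = - (c / lam) * exp (- (lam * of_real x))"
    using \<open>K x = - (c / lam)\<close> by simp
  finally show ?thesis
    by (simp add: algebra_simps)
qed

lemma constant_ode_solution:
  fixes z :: "real \<Rightarrow> complex"
  assumes "z 0 = 0" "x \<in> {0..L}"
    and "\<And>t. t \<in> {0..L} \<Longrightarrow> (z has_vector_derivative c) (at t within {0..L})"
  shows "z x = c * of_real x"
proof -
  have "((\<lambda>t. z t - c * of_real t) has_vector_derivative 0) (at t within {0..L})"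
    if "t \<in> {0..L}" for t
    using has_vector_derivative_diff[OF assms(3)[OF that]
        has_vector_derivative_mult_right[where a = c, OF has_vector_derivative_of_real[OF DERIV_ident]]]
    by simp
  then obtain C where "\<And>t. t \<in> {0..L} \<Longrightarrow> z t - c * of_real t = C"
    using has_vector_derivative_zero_constant[of "{0..L}" "\<lambda>t. z t - c * of_real t"]
    by (metis convex_real_interval(5))
  from this[of x] this[of 0] show ?thesis
    using assms(1,2) by simp
qed

lemma exp_minus_mult_eq_1_iff_lamk:
  assumes "L > 0"
  shows "exp (- (lam * of_real L)) = 1 \<longleftrightarrow> (\<exists>k. lam = lamk L k)"
proof
  assume "exp (- (lam * of_real L)) = 1"
  then obtain n :: int where re: "Re (- (lam * of_real L)) = 0"
    and im: "Im (- (lam * of_real L)) = of_int (2 * n) * pi"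
    unfolding exp_eq_1 by blast
  have "lam = lamk L (- n)"
  proof (rule complex_eqI)
    show "Re lam = Re (lamk L (- n))"
      using re assms by (simp add: lamk_def)
    show "Im lam = Im (lamk L (- n))"
      using im assms by (simp add: lamk_def field_simps)
  qed
  then show "\<exists>k. lam = lamk L k" ..
next
  assume "\<exists>k. lam = lamk L k"
  then obtain k where "lam = lamk L k" ..
  then have "lam * of_real L = 2 * \<i> * of_int k * of_real pi"
    using assms by (simp add: lamk_def field_simps)
  then show "exp (- (lam * of_real L)) = 1"
    unfolding exp_eq_1 by (auto intro!: exI[of _ "- k"])
qed

lemma in_ker_Astar_nontrivial_imp_eigenvalue:
  assumes "L > 0" "L2 L g" "in_ker_Astar L g lam z" "z L = 0"
    and "x \<in> {0..L}" "z x \<noteq> 0"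
  shows "\<exists>k. k \<noteq> 0 \<and> lam = lamk L k \<and> lam0 L g - laplace_cnj L g lam = lam"
proof -
  define c where "c = (LINT y:{0..L}|lebesgue. cnj (g y) * z y)"
  have "z 0 = 0"
    using assms(3,4) by (simp add: in_ker_Astar_def dom_Astar_def)
  have z': "(z has_vector_derivative c - lam * z t) (at t within {0..L})" if "t \<in> {0..L}" for t
    unfolding c_def by (rule in_ker_Astar_has_vector_derivative[OF assms(3) that])
  have "lam \<noteq> 0"
  proof
    assume "lam = 0"
    then have z_lin: "z t = c * of_real t" if "t \<in> {0..L}" for t
      using constant_ode_solution[where z = z and c = c, OF \<open>z 0 = 0\<close> that] z' by simp
    then have "c = 0"
      using assms(1,4) z_lin[of L] by simp
    then show False
      using z_lin[OF assms(5)] assms(6) by simp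
  qed
  have z_eq: "z t = c / lam * (1 - exp (- (lam * of_real t)))" if "t \<in> {0..L}" for t
    by (rule linear_ode_solution[OF \<open>lam \<noteq> 0\<close> \<open>z 0 = 0\<close> that z'])
  have "c \<noteq> 0"
    using z_eq[OF assms(5)] assms(6) by auto
  have "exp (- (lam * of_real L)) = 1"
    using z_eq[of L] assms(1,4) \<open>c \<noteq> 0\<close> \<open>lam \<noteq> 0\<close> by simp
  then obtain k where k: "lam = lamk L k"
    using exp_minus_mult_eq_1_iff_lamk[OF assms(1)] by blast
  have "k \<noteq> 0"
    using k \<open>lam \<noteq> 0\<close> by (auto simp: lamk_def)
  have "(LINT y:{0..L}|lebesgue. cnj (g y) * z y)
      = (LINT y:{0..L}|lebesgue. cnj (g y) * (c / lam * (1 - exp (- (lam * of_real y)))))"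
    by (rule set_lebesgue_integral_cong) (auto simp: z_eq)
  then have "c = c / lam * (lam0 L g - laplace_cnj L g lam)"
    unfolding c_def[symmetric] set_integral_cnj_mult_one_minus_exp[OF assms(2)] .
  then have "c * lam = c * (lam0 L g - laplace_cnj L g lam)"
    using \<open>lam \<noteq> 0\<close> by (simp add: field_simps)
  then have "lam0 L g - laplace_cnj L g lam = lam"
    using \<open>c \<noteq> 0\<close> by simp
  with k \<open>k \<noteq> 0\<close> show ?thesis
    by blast
qed

lemma eigenfunction_in_ker_Astar:
  assumes "L > 0" "L2 L g" "lam0 L g - laplace_cnj L g (lamk L k) = lamk L k"
  defines "z \<equiv> \<lambda>x. 1 - exp (- (lamk L k * of_real x))"
  shows "in_ker_Astar L g (lamk L k) z \<and> Bstar L z = 0"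
proof -
  define lam where "lam = lamk L k"
  define w where "w x = lam * exp (- (lam * of_real x))" for x :: real
  have z': "(z has_vector_derivative w x) (at x within S)" for x S
    using has_vector_derivative_diff[OF has_vector_derivative_const[of 1]
        has_vector_derivative_exp_mult_of_real[of "- lam" x S]]
    by (simp add: z_def w_def lam_def)
  have "z 0 = 0" "z L = 0"
    using exp_minus_mult_eq_1_iff_lamk[OF assms(1), of lam] by (auto simp: z_def lam_def)
  have w_cont: "continuous_on S w" for S
    unfolding w_def by (intro continuous_intros)
  have "z x = z 0 + (LINT t:{0..x}|lebesgue. w t)" if "x \<in> {0..L}" for x
  proof -
    have "(LINT t:{0..x}|lebesgue. w t) = integral {0..x} w"
      by (intro set_lebesgue_integral_eq_integral(2) absolutely_integrable_continuous_real w_cont)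
    also have "\<dots> = z x - z 0"
      by (rule integral_unique, rule fundamental_theorem_of_calculus) (use that z' in auto)
    finally show ?thesis
      by simp
  qed
  then have "has_L2_deriv L z w"
    unfolding has_L2_deriv_def using continuous_on_imp_L2[OF w_cont] by blast
  moreover have "L2 L z"
    unfolding z_def by (intro continuous_on_imp_L2 continuous_intros)
  moreover have "(LINT y:{0..L}|lebesgue. cnj (g y) * z y) = lam"
    using set_integral_cnj_mult_one_minus_exp[OF assms(2), of 1 lam] assms(3)
    by (simp add: z_def lam_def)
  then have "lam * z x = - w x + (LINT y:{0..L}|lebesgue. cnj (g y) * z y)" for x
    by (simp add: z_def w_def lam_def algebra_simps)
  ultimately show ?thesis
    using \<open>z 0 = 0\<close> \<open>z L = 0\<close>
    unfolding in_ker_Astar_def dom_Astar_def H1_def Bstar_def lam_def by auto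
qed

lemma eigenfunction_not_AE_zero:
  assumes "L > 0" "k \<noteq> 0"
  shows "\<not> (AE x in lebesgue. x \<in> {0..L} \<longrightarrow> 1 - exp (- (lamk L k * of_real x)) = 0)"
proof
  assume AE_zero: "AE x in lebesgue. x \<in> {0..L} \<longrightarrow> 1 - exp (- (lamk L k * of_real x)) = 0"
  define t where "t = L / (2 * \<bar>real_of_int k\<bar>)"
  have "1 \<le> \<bar>real_of_int k\<bar>"
    using assms(2) by linarith
  then have "t \<in> {0<..<L}"
    using assms by (auto simp: t_def divide_less_eq)
  then have "1 - exp (- (lamk L k * of_real t)) = 0"
    by (intro continuous_AE_zero_imp_zero[OF _ AE_zero] continuous_intros)
  moreover have "lamk L k * of_real t = \<i> * pi \<or> lamk L k * of_real t = - (\<i> * pi)"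
    using assms by (cases "k > 0") (auto simp: lamk_def t_def field_simps)
  ultimately show False
    by (auto simp: exp_minus)
qed

theorem proposition9:
  fixes L :: real and g :: "real \<Rightarrow> complex"
  assumes "L > 0"
    and "L2 L g"
    and "\<forall>k::int. k \<noteq> 0 \<longrightarrow> lam0 L g \<noteq> lamk L k"
  shows "(\<forall>lam::complex. \<forall>z. in_ker_Astar L g lam z \<and> Bstar L z = 0
            \<longrightarrow> (AE x in lebesgue. x \<in> {0..L} \<longrightarrow> z x = 0))
     \<longleftrightarrow> (\<forall>k::int. k \<noteq> 0 \<longrightarrow>
            1 + (1 / (lamk L k - lam0 L g)) *
                (LINT x:{0..L}|lebesgue. cnj (g x) * exp (- (lamk L k * of_real x))) \<noteq> 0)"
proof -
  have eigen_iff: "1 + 1 / (lamk L k - lam0 L g) * laplace_cnj L g (lamk L k) = 0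
      \<longleftrightarrow> lam0 L g - laplace_cnj L g (lamk L k) = lamk L k" if "k \<noteq> 0" for k
  proof -
    have "lamk L k - lam0 L g \<noteq> 0"
      using assms(3) that by auto
    then show ?thesis
      by (auto simp: field_simps)
  qed
  show ?thesis
    unfolding laplace_cnj_def[symmetric]
  proof (intro iffI allI impI notI)
    fix k :: int
    assume trivial: "\<forall>lam z. in_ker_Astar L g lam z \<and> Bstar L z = 0
                       \<longrightarrow> (AE x in lebesgue. x \<in> {0..L} \<longrightarrow> z x = 0)"
      and "k \<noteq> 0" and "1 + 1 / (lamk L k - lam0 L g) * laplace_cnj L g (lamk L k) = 0"
    then show False
      using eigenfunction_in_ker_Astar[OF assms(1,2)] eigenfunction_not_AE_zero[OF assms(1)]
        eigen_iff by blast
  next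
    fix lam z
    assume "\<forall>k. k \<noteq> 0 \<longrightarrow> 1 + 1 / (lamk L k - lam0 L g) * laplace_cnj L g (lamk L k) \<noteq> 0"
      and "in_ker_Astar L g lam z \<and> Bstar L z = 0"
    then have "z x = 0" if "x \<in> {0..L}" for x
      using in_ker_Astar_nontrivial_imp_eigenvalue[OF assms(1,2) _ _ that] eigen_iff
      by (metis Bstar_def)
    then show "AE x in lebesgue. x \<in> {0..L} \<longrightarrow> z x = 0"
      by (intro AE_I2) simp
  qed
qed

end
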